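(* Let $W\in\mathbb{R}^{m\times n}$ with columns $W_1,\dots,W_n$ and $F=WW^\top$, and assume every $W_i$ is an eigenvector of $F$ with positive eigenvalue. Let $\lambda_k>0$ be an eigenvalue of $F$, $C_k:=\{i:FW_i=\lambda_kW_i\}$ with $p:=|C_k|$, $V_k:=\operatorname{span}\{W_i:i\in C_k\}$, and $M_k:=W_{C_k}^\top W_{C_k}\in\mathbb{R}^{p\times p}$ the Gram matrix of these columns. Then the cluster $C_k$ has simplex geometry if and only if $M_k$ has exactly two eigenspaces $$W_0=\ker(M_k)=\operatorname{span}(\mathbf{1}),\qquad W_1=\operatorname{Im}(M_k)=\mathbf{1}^\perp,$$ with eigenvalue $0$ on $W_0$ and eigenvalue $\lambda_k=\frac{|C_k|}{\dim(V_k)}$ on $W_1$.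
   Context: $\mathbf{1}\in\mathbb{R}^p$ is the all-ones vector. A cluster of $p\ge2$ vectors $(W_i)_{i\in C_k}$ has simplex geometry if $\|W_i\|=1$ for all $i$ and $\langle W_i,W_j\rangle=-\frac{1}{p-1}$ for all $i\neq j$ (equivalently, its Gram matrix is $\frac{p}{p-1}(I-\frac1pJ)$, $J$ the all-ones matrix). *)

theory Defs
  imports "HOL-Analysis.Analysis"
begin

definition simplex_geometry :: "real^'n^'m \<Rightarrow> 'n set \<Rightarrow> bool" where
  "simplex_geometry W C \<longleftrightarrow> card C \<ge> 2 \<and>
     (\<forall>i\<in>C. norm (column i W) = 1) \<and>
     (\<forall>i\<in>C. \<forall>j\<in>C. i \<noteq> j \<longrightarrow> column i W \<bullet> column j W = - 1 / (real (card C) - 1))"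

text \<open>The space \<open>\<real>^C\<close>, realised as the vectors in \<open>\<real>^n\<close> supported on \<open>C\<close>.\<close>
definition coords_on :: "'n::finite set \<Rightarrow> (real^'n) set" where
  "coords_on C = {x. \<forall>i. i \<notin> C \<longrightarrow> x $ i = 0}"

definition ones_on :: "'n::finite set \<Rightarrow> real^'n" where
  "ones_on C = (\<chi> i. if i \<in> C then 1 else 0)"

text \<open>The Gram matrix \<open>M = W_C^T W_C\<close> acting on \<open>\<real>^C\<close>.\<close>
definition gram_on :: "real^'n^'m \<Rightarrow> 'n::finite set \<Rightarrow> real^'n \<Rightarrow> real^'n" where
  "gram_on W C x = (\<chi> i. if i \<in> C then (\<Sum>j\<in>C. (column i W \<bullet> column j W) * x $ j) else 0)"

definition gram_eigenvalue :: "real^'n^'m \<Rightarrow> 'n::finite set \<Rightarrow> real \<Rightarrow> bool" where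
  "gram_eigenvalue W C \<mu> \<longleftrightarrow> (\<exists>x\<in>coords_on C. x \<noteq> 0 \<and> gram_on W C x = \<mu> *\<^sub>R x)"

definition gram_eigenspace :: "real^'n^'m \<Rightarrow> 'n::finite set \<Rightarrow> real \<Rightarrow> (real^'n) set" where
  "gram_eigenspace W C \<mu> = {x \<in> coords_on C. gram_on W C x = \<mu> *\<^sub>R x}"

definition gram_kernel :: "real^'n^'m \<Rightarrow> 'n::finite set \<Rightarrow> (real^'n) set" where
  "gram_kernel W C = {x \<in> coords_on C. gram_on W C x = 0}"

definition gram_image :: "real^'n^'m \<Rightarrow> 'n::finite set \<Rightarrow> (real^'n) set" where
  "gram_image W C = gram_on W C ` coords_on C"

definition ones_perp :: "'n::finite set \<Rightarrow> (real^'n) set" where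
  "ones_perp C = {x \<in> coords_on C. x \<bullet> ones_on C = 0}"

end

theory Submission
  imports Defs
begin

text \<open>Write \<open>M\<close> for the Gram matrix of the cluster and \<open>p = |C|\<close>. Simplex geometry says exactly
  that \<open>M = p/(p-1) (I - J/p)\<close>, i.e. \<open>p/(p-1)\<close> times the orthogonal projection of \<open>\<real>^C\<close> onto
  \<open>\<one>\<^sup>\<bottom>\<close>. Such an operator has kernel \<open>span \<one>\<close> and acts by \<open>p/(p-1)\<close> on \<open>\<one>\<^sup>\<bottom>\<close>, which is its
  image; conversely these two eigenspaces determine \<open>M\<close>. The cluster columns are
  \<open>\<lambda>\<close>-eigenvectors of \<open>F = W W\<^sup>T\<close> orthogonal to all other columns, hence \<open>M\<^sup>2 = \<lambda> M\<close>, which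
  forces the nonzero eigenvalue \<open>p/(p-1)\<close> to be \<open>\<lambda>\<close>. Finally \<open>ker M = ker W\<^sub>C = span \<one>\<close> gives
  \<open>dim V = p - 1\<close>. The hypotheses on \<open>F\<close> enter only through \<open>M\<^sup>2 = \<lambda> M\<close>, for which it suffices that
  every column is an eigenvector of \<open>F\<close>.\<close>

definition cluster_map :: "real^'n^'m \<Rightarrow> 'n set \<Rightarrow> real^'n \<Rightarrow> real^'m" where
  "cluster_map W C x = (\<Sum>j\<in>C. x $ j *\<^sub>R column j W)"

definition center_on :: "'n::finite set \<Rightarrow> real^'n \<Rightarrow> real^'n" where
  "center_on C x = x - ((x \<bullet> ones_on C) / real (card C)) *\<^sub>R ones_on C"

lemma subspace_coords_on: "subspace (coords_on C)"
  by (auto simp: subspace_def coords_on_def)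

lemma dim_coords_on: "dim (coords_on C) = card C"
  using dim_substandard_cart[of C, where 'a = real] by (simp add: dim_vec_eq coords_on_def)

lemma inner_coords_on: "x \<in> coords_on C \<Longrightarrow> x \<bullet> y = (\<Sum>i\<in>C. x $ i * y $ i)"
  unfolding inner_vec_def coords_on_def inner_real_def
  by (rule sum.mono_neutral_right) auto

lemma ones_on_in_coords_on: "ones_on C \<in> coords_on C"
  by (simp add: ones_on_def coords_on_def)

lemma inner_ones_on: "x \<in> coords_on C \<Longrightarrow> x \<bullet> ones_on C = (\<Sum>i\<in>C. x $ i)"
  by (simp add: inner_coords_on ones_on_def)

lemma ones_on_nth: "ones_on C $ i = (if i \<in> C then 1 else 0)"
  by (simp add: ones_on_def)

lemma inner_ones_on_self: "ones_on C \<bullet> ones_on C = real (card C)"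
  by (simp add: inner_ones_on ones_on_in_coords_on ones_on_nth)

lemma ones_on_eq_0_iff: "ones_on C = 0 \<longleftrightarrow> C = {}"
  by (auto simp: ones_on_def vec_eq_iff)

lemma center_on_nth:
  "x \<in> coords_on C \<Longrightarrow>
     center_on C x $ i = (if i \<in> C then x $ i - (\<Sum>j\<in>C. x $ j) / real (card C) else 0)"
  by (auto simp: center_on_def inner_ones_on ones_on_nth coords_on_def)

lemma center_on_in_ones_perp:
  assumes "x \<in> coords_on C"
  shows "center_on C x \<in> ones_perp C"
proof -
  have "center_on C x \<in> coords_on C"
    using assms by (simp add: coords_on_def center_on_nth)
  moreover have "center_on C x \<bullet> ones_on C = 0"
  proof (cases "C = {}")
    case True
    then show ?thesis using ones_on_eq_0_iff[of C] by (simp add: center_on_def)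
  next
    case False
    then show ?thesis by (simp add: center_on_def inner_diff_left inner_ones_on_self)
  qed
  ultimately show ?thesis
    by (simp add: ones_perp_def)
qed

lemma center_on_eq_self_iff:
  "x \<in> coords_on C \<Longrightarrow> center_on C x = x \<longleftrightarrow> x \<in> ones_perp C"
  using center_on_in_ones_perp[of x C] by (auto simp: center_on_def ones_perp_def)

lemma center_on_eq_0_iff:
  "x \<in> coords_on C \<Longrightarrow> center_on C x = 0 \<longleftrightarrow> x \<in> span {ones_on C}"
  by (cases "C = {}") (auto simp: center_on_def span_singleton ones_on_eq_0_iff inner_ones_on_self)

lemma ones_perp_nontrivial_iff:
  fixes C :: "'n::finite set"
  shows "(\<exists>x\<in>ones_perp C. x \<noteq> 0) \<longleftrightarrow> card C \<ge> 2"
proof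
  assume "\<exists>x\<in>ones_perp C. x \<noteq> 0"
  then obtain x i where x: "x \<in> ones_perp C" and xi: "x $ i \<noteq> 0"
    by (auto simp: vec_eq_iff)
  then have "i \<in> C" and "(\<Sum>j\<in>C. x $ j) = 0"
    by (auto simp: ones_perp_def coords_on_def inner_ones_on)
  with xi have "C \<noteq> {i}" by auto
  with \<open>i \<in> C\<close> show "card C \<ge> 2"
    using card_le_Suc0_iff_eq[of C] by fastforce
next
  assume "card C \<ge> 2"
  then obtain i j where ij: "i \<in> C" "j \<in> C" "i \<noteq> j"
    using card_le_Suc0_iff_eq[of C] by fastforce
  let ?x = "axis i 1 - axis j 1 :: real^'n"
  have "?x \<in> ones_perp C"
    using ij by (simp add: ones_perp_def coords_on_def inner_ones_on axis_def sum_subtractf)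
  moreover have "?x $ i \<noteq> 0"
    using ij by (simp add: axis_def)
  ultimately show "\<exists>x\<in>ones_perp C. x \<noteq> 0"
    by (metis zero_index)
qed

lemma linear_gram_on: "linear (gram_on W C)"
  by (rule linearI) (simp_all add: gram_on_def vec_eq_iff sum.distrib sum_distrib_left algebra_simps)

lemma gram_on_in_coords_on: "gram_on W C x \<in> coords_on C"
  by (simp add: gram_on_def coords_on_def)

lemma gram_on_axis:
  "i \<in> C \<Longrightarrow> j \<in> C \<Longrightarrow> gram_on W C (axis j 1) $ i = column i W \<bullet> column j W"
  by (simp add: gram_on_def axis_def if_distrib cong: if_cong)

lemma gram_eigenspace_0: "gram_eigenspace W C 0 = gram_kernel W C"
  by (simp add: gram_eigenspace_def gram_kernel_def)

lemma linear_cluster_map: "linear (cluster_map W C)"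
  by (rule linearI) (simp_all add: cluster_map_def scaleR_add_left sum.distrib scaleR_sum_right)

lemma cluster_map_axis: "i \<in> C \<Longrightarrow> cluster_map W C (axis i 1) = column i W"
proof -
  have "axis i 1 $ j *\<^sub>R column j W = (if j = i then column j W else 0)" for j
    by (simp add: axis_def)
  then show "i \<in> C \<Longrightarrow> ?thesis"
    by (simp add: cluster_map_def)
qed

lemma gram_on_nth_eq_inner_cluster_map:
  "i \<in> C \<Longrightarrow> gram_on W C x $ i = column i W \<bullet> cluster_map W C x"
  by (simp add: gram_on_def cluster_map_def inner_sum_right mult.commute)

lemma inner_cluster_map_self:
  assumes "x \<in> coords_on C"
  shows "cluster_map W C x \<bullet> cluster_map W C x = x \<bullet> gram_on W C x"
proof -
  have "cluster_map W C x \<bullet> cluster_map W C x = (\<Sum>i\<in>C. x $ i * (column i W \<bullet> cluster_map W C x))"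
    by (simp add: cluster_map_def inner_sum_left)
  also have "\<dots> = x \<bullet> gram_on W C x"
    using assms by (simp add: inner_coords_on gram_on_nth_eq_inner_cluster_map)
  finally show ?thesis .
qed

lemma gram_kernel_eq_cluster_map_kernel:
  "gram_kernel W C = {x \<in> coords_on C. cluster_map W C x = 0}"
proof -
  have "gram_on W C x = 0 \<longleftrightarrow> cluster_map W C x = 0" if "x \<in> coords_on C" for x
  proof
    assume "gram_on W C x = 0"
    then show "cluster_map W C x = 0"
      using inner_cluster_map_self[OF that, of W] by simp
  next
    assume "cluster_map W C x = 0"
    then have "gram_on W C x $ i = 0" for i
      by (cases "i \<in> C") (simp add: gram_on_nth_eq_inner_cluster_map, simp add: gram_on_def)
    then show "gram_on W C x = 0"
      by (simp add: vec_eq_iff)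
  qed
  then show ?thesis
    by (auto simp: gram_kernel_def)
qed

lemma cluster_map_image: "cluster_map W C ` coords_on C = span ((\<lambda>i. column i W) ` C)"
proof
  show "cluster_map W C ` coords_on C \<subseteq> span ((\<lambda>i. column i W) ` C)"
    unfolding cluster_map_def by (auto intro: span_sum span_scale span_base)
  have "(\<lambda>i. column i W) ` C \<subseteq> cluster_map W C ` coords_on C"
    by (auto simp: cluster_map_axis[symmetric] coords_on_def axis_def)
  then show "span ((\<lambda>i. column i W) ` C) \<subseteq> cluster_map W C ` coords_on C"
    by (intro span_minimal linear_subspace_image linear_cluster_map subspace_coords_on)
qed

lemma cluster_map_image_remove:
  assumes ones: "cluster_map W C (ones_on C) = 0" and "i0 \<in> C"
  shows "cluster_map W C ` coords_on (C - {i0}) = cluster_map W C ` coords_on C"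
proof
  show "cluster_map W C ` coords_on (C - {i0}) \<subseteq> cluster_map W C ` coords_on C"
    by (auto simp: coords_on_def)
  show "cluster_map W C ` coords_on C \<subseteq> cluster_map W C ` coords_on (C - {i0})"
  proof
    fix y assume "y \<in> cluster_map W C ` coords_on C"
    then obtain x where x: "x \<in> coords_on C" and y: "y = cluster_map W C x"
      by blast
    let ?x' = "x - x $ i0 *\<^sub>R ones_on C"
    have "?x' \<in> coords_on (C - {i0})"
      using x by (auto simp: coords_on_def ones_on_nth)
    moreover have "cluster_map W C ?x' = y"
      using ones y by (simp add: linear_diff[OF linear_cluster_map] linear_scale[OF linear_cluster_map])
    ultimately show "y \<in> cluster_map W C ` coords_on (C - {i0})"
      by blast
  qed
qed

lemma inj_on_cluster_map_remove:
  assumes ker: "gram_kernel W C = span {ones_on C}" and "i0 \<in> C"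
  shows "inj_on (cluster_map W C) (coords_on (C - {i0}))"
proof -
  have "x = 0" if x: "x \<in> coords_on (C - {i0})" and "cluster_map W C x = 0" for x
  proof -
    have "x \<in> gram_kernel W C"
      using that by (auto simp: gram_kernel_eq_cluster_map_kernel coords_on_def)
    then obtain k where "x = k *\<^sub>R ones_on C"
      using ker by (auto simp: span_singleton)
    moreover have "x $ i0 = 0"
      using x by (simp add: coords_on_def)
    ultimately show "x = 0"
      using \<open>i0 \<in> C\<close> by (simp add: ones_on_nth)
  qed
  then show ?thesis
    by (simp add: linear_injective_on_subspace_0 linear_cluster_map subspace_coords_on)
qed

lemma dim_span_columns_eq:
  assumes ker: "gram_kernel W C = span {ones_on C}" and "C \<noteq> {}"
  shows "dim (span ((\<lambda>i. column i W) ` C)) = card C - 1"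
proof -
  obtain i0 where i0: "i0 \<in> C"
    using \<open>C \<noteq> {}\<close> by blast
  have "cluster_map W C (ones_on C) = 0"
    using ker span_base[of "ones_on C" "{ones_on C}"] by (auto simp: gram_kernel_eq_cluster_map_kernel)
  then have "span ((\<lambda>i. column i W) ` C) = cluster_map W C ` coords_on (C - {i0})"
    by (simp add: cluster_map_image_remove i0 cluster_map_image)
  also have "dim \<dots> = dim (coords_on (C - {i0}))"
    using inj_on_cluster_map_remove[OF ker i0]
    by (intro dim_image_eq linear_cluster_map) (simp add: span_eq_iff[THEN iffD2] subspace_coords_on)
  also have "\<dots> = card C - 1"
    using i0 by (simp add: dim_coords_on)
  finally show ?thesis .
qed

lemma gram_on_eq_center_on_iff:
  "(\<forall>x\<in>coords_on C. gram_on W C x = c *\<^sub>R center_on C x) \<longleftrightarrow>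
   (\<forall>i\<in>C. \<forall>j\<in>C. column i W \<bullet> column j W = c * ((if i = j then 1 else 0) - 1 / real (card C)))"
  (is "?operator \<longleftrightarrow> ?entries")
proof
  assume ?operator
  show ?entries
  proof (intro ballI)
    fix i j assume ij: "i \<in> C" "j \<in> C"
    have axis: "axis j 1 \<in> coords_on C"
      using ij by (simp add: coords_on_def axis_def)
    have "column i W \<bullet> column j W = gram_on W C (axis j 1) $ i"
      using ij by (simp add: gram_on_axis)
    also have "\<dots> = c * center_on C (axis j 1) $ i"
      using \<open>?operator\<close> axis by simp
    also have "\<dots> = c * ((if i = j then 1 else 0) - 1 / real (card C))"
      using ij axis by (simp add: center_on_nth axis_def)
    finally show "column i W \<bullet> column j W = c * ((if i = j then 1 else 0) - 1 / real (card C))" .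
  qed
next
  assume ?entries
  show ?operator
  proof
    fix x assume x: "x \<in> coords_on C"
    have "gram_on W C x $ i = c * center_on C x $ i" if "i \<in> C" for i
    proof -
      have "gram_on W C x $ i = (\<Sum>j\<in>C. c * ((if i = j then 1 else 0) - 1 / real (card C)) * x $ j)"
        using \<open>?entries\<close> that by (simp add: gram_on_def)
      also have "\<dots> = (\<Sum>j\<in>C. (if i = j then c * x $ j else 0) - c * (x $ j / real (card C)))"
        by (intro sum.cong) (auto simp: algebra_simps divide_inverse)
      also have "\<dots> = c * (x $ i - (\<Sum>j\<in>C. x $ j) / real (card C))"
        using that by (simp add: sum_subtractf sum_distrib_left[symmetric] sum_divide_distrib[symmetric]
            right_diff_distrib)
      finally show ?thesis
        using x that by (simp add: center_on_nth)
    qed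
    then show "gram_on W C x = c *\<^sub>R center_on C x"
      using x by (auto simp: vec_eq_iff center_on_nth gram_on_def)
  qed
qed

lemma simplex_geometry_iff_gram_on_center_on:
  assumes "card C \<ge> 2"
  shows "simplex_geometry W C \<longleftrightarrow>
    (\<forall>x\<in>coords_on C. gram_on W C x = (real (card C) / (real (card C) - 1)) *\<^sub>R center_on C x)"
proof -
  let ?p = "real (card C)"
  have p: "?p - 1 > 0" "?p \<noteq> 0"
    using assms by auto
  have entry: "(if i = j then 1 else - 1 / (?p - 1)) = ?p / (?p - 1) * ((if i = j then 1 else 0) - 1 / ?p)"
    for i j :: 'n
    using p by (simp add: field_simps)
  have "simplex_geometry W C \<longleftrightarrow>
      (\<forall>i\<in>C. \<forall>j\<in>C. column i W \<bullet> column j W = (if i = j then 1 else - 1 / (?p - 1)))"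
    using assms by (auto simp: simplex_geometry_def norm_eq_1)
  then show ?thesis
    by (simp only: entry gram_on_eq_center_on_iff)
qed

context
  fixes W :: "real^'n^'m" and C :: "'n set" and c :: real
  assumes card_C: "card C \<ge> 2" and c_nonzero: "c \<noteq> 0"
    and gram_on_center_on: "\<And>x. x \<in> coords_on C \<Longrightarrow> gram_on W C x = c *\<^sub>R center_on C x"
begin

lemma gram_kernel_eq_span_ones: "gram_kernel W C = span {ones_on C}"
proof -
  have "span {ones_on C} \<subseteq> coords_on C"
    by (simp add: span_minimal subspace_coords_on ones_on_in_coords_on)
  then show ?thesis
    using c_nonzero by (auto simp: gram_kernel_def gram_on_center_on center_on_eq_0_iff)
qed

lemma gram_eigenspace_eq_ones_perp: "gram_eigenspace W C c = ones_perp C"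
  using c_nonzero
  by (auto simp: gram_eigenspace_def gram_on_center_on center_on_eq_self_iff ones_perp_def)

lemma gram_image_eq_ones_perp: "gram_image W C = ones_perp C"
proof
  show "gram_image W C \<subseteq> ones_perp C"
  proof
    fix y assume "y \<in> gram_image W C"
    then obtain x where x: "x \<in> coords_on C" and y: "y = c *\<^sub>R center_on C x"
      by (auto simp: gram_image_def gram_on_center_on)
    show "y \<in> ones_perp C"
      using center_on_in_ones_perp[OF x] by (simp add: y ones_perp_def coords_on_def)
  qed
  show "ones_perp C \<subseteq> gram_image W C"
  proof
    fix y assume "y \<in> ones_perp C"
    then have y: "y \<in> coords_on C" "gram_on W C y = c *\<^sub>R y"
      using gram_eigenspace_eq_ones_perp by (auto simp: gram_eigenspace_def)
    then have "y = gram_on W C ((1 / c) *\<^sub>R y)"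
      using c_nonzero by (simp add: linear_scale[OF linear_gram_on])
    moreover have "(1 / c) *\<^sub>R y \<in> coords_on C"
      using y(1) by (simp add: coords_on_def)
    ultimately show "y \<in> gram_image W C"
      unfolding gram_image_def by blast
  qed
qed

lemma gram_eigenvalues_eq: "{\<mu>. gram_eigenvalue W C \<mu>} = {0, c}"
proof (intro equalityI subsetI)
  fix \<mu> assume "\<mu> \<in> {\<mu>. gram_eigenvalue W C \<mu>}"
  then obtain x where x: "x \<in> coords_on C" "x \<noteq> 0" "gram_on W C x = \<mu> *\<^sub>R x"
    by (auto simp: gram_eigenvalue_def)
  show "\<mu> \<in> {0, c}"
  proof (cases "x \<in> ones_perp C")
    case True
    then have "c *\<^sub>R x = \<mu> *\<^sub>R x"
      using x(3) unfolding gram_eigenspace_eq_ones_perp[symmetric] by (auto simp: gram_eigenspace_def)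
    then show ?thesis
      using x(2) by simp
  next
    case False
    have "gram_on W C x \<in> gram_image W C"
      using x(1) by (simp add: gram_image_def)
    then have "\<mu> *\<^sub>R x \<in> ones_perp C"
      using x(3) gram_image_eq_ones_perp by simp
    then have "\<mu> * (x \<bullet> ones_on C) = 0"
      by (simp add: ones_perp_def)
    then show ?thesis
      using False x(1) by (simp add: ones_perp_def)
  qed
next
  fix \<mu> assume "\<mu> \<in> {0, c}"
  moreover have "gram_eigenvalue W C 0"
  proof -
    have "ones_on C \<noteq> 0"
      using card_C ones_on_eq_0_iff[of C] by auto
    moreover have "ones_on C \<in> gram_eigenspace W C 0"
      by (simp add: gram_eigenspace_0 gram_kernel_eq_span_ones span_base)
    ultimately show ?thesis
      by (auto simp: gram_eigenvalue_def gram_eigenspace_def)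
  qed
  moreover have "gram_eigenvalue W C c"
    using card_C ones_perp_nontrivial_iff[of C] gram_eigenspace_eq_ones_perp
    by (auto simp: gram_eigenvalue_def gram_eigenspace_def)
  ultimately show "\<mu> \<in> {\<mu>. gram_eigenvalue W C \<mu>}"
    by auto
qed

end

lemma gram_on_eq_center_on_if_eigenspaces:
  assumes "gram_kernel W C = span {ones_on C}" and "gram_eigenspace W C c = ones_perp C"
    and x: "x \<in> coords_on C"
  shows "gram_on W C x = c *\<^sub>R center_on C x"
proof -
  have "gram_on W C (center_on C x) = c *\<^sub>R center_on C x"
    using assms(2) center_on_in_ones_perp[OF x] by (auto simp: gram_eigenspace_def)
  moreover have "gram_on W C (x - center_on C x) = 0"
  proof -
    have "gram_on W C (ones_on C) = 0"
      using assms(1) span_base[of "ones_on C" "{ones_on C}"] by (auto simp: gram_kernel_def)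
    then show ?thesis
      by (simp add: center_on_def linear_scale[OF linear_gram_on])
  qed
  ultimately show ?thesis
    by (simp add: linear_diff[OF linear_gram_on])
qed

lemma inner_mult_transpose_right:
  fixes W :: "real^'n^'m"
  shows "x \<bullet> ((W ** transpose W) *v y) = (\<Sum>j\<in>UNIV. (column j W \<bullet> x) * (column j W \<bullet> y))"
proof -
  have transpose_nth: "(transpose W *v z) $ j = column j W \<bullet> z" for z j
    by (simp add: matrix_vector_mult_def transpose_def column_def inner_vec_def mult.commute)
  have "(W ** transpose W) *v y = W *v (transpose W *v y)"
    by (rule matrix_vector_mul_assoc[symmetric])
  also have "\<dots> = (\<Sum>j\<in>UNIV. (column j W \<bullet> y) *\<^sub>R column j W)"
    unfolding matrix_mult_sum[of W] transpose_nth scalar_mult_eq_scaleR ..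
  finally show ?thesis
    by (simp add: inner_sum_right inner_commute mult.commute)
qed

lemma eigenvectors_mult_transpose_orthogonal:
  fixes W :: "real^'n^'m"
  assumes "(W ** transpose W) *v u = \<alpha> *\<^sub>R u" and "(W ** transpose W) *v v = \<beta> *\<^sub>R v"
    and "\<alpha> \<noteq> \<beta>"
  shows "u \<bullet> v = 0"
proof -
  have "\<beta> * (u \<bullet> v) = u \<bullet> ((W ** transpose W) *v v)"
    using assms(2) by simp
  also have "\<dots> = v \<bullet> ((W ** transpose W) *v u)"
    by (simp add: inner_mult_transpose_right mult.commute)
  also have "\<dots> = \<alpha> * (u \<bullet> v)"
    using assms(1) by (simp add: inner_commute)
  finally show ?thesis
    using assms(3) by simp
qed

text \<open>Entrywise \<open>(M\<^sup>2)\<^sub>k\<^sub>i = \<langle>W\<^sub>k, F W\<^sub>i\<rangle> = \<lambda> M\<^sub>k\<^sub>i\<close>: in \<open>F = \<Sum>\<^sub>j W\<^sub>j W\<^sub>j\<^sup>T\<close> the columns outside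
  the cluster drop out, being eigenvectors of the symmetric \<open>F\<close> for other eigenvalues.\<close>
lemma gram_on_gram_on:
  fixes W :: "real^'n^'m"
  assumes eigencolumns: "\<forall>j. \<exists>\<mu>. (W ** transpose W) *v column j W = \<mu> *\<^sub>R column j W"
    and C_def: "C = {i. (W ** transpose W) *v column i W = lam *\<^sub>R column i W}"
  shows "gram_on W C (gram_on W C x) = lam *\<^sub>R gram_on W C x"
proof -
  have orthogonal: "column j W \<bullet> column i W = 0" if "i \<in> C" "j \<notin> C" for i j
  proof -
    obtain \<mu> where \<mu>: "(W ** transpose W) *v column j W = \<mu> *\<^sub>R column j W"
      using eigencolumns by blast
    with that have "\<mu> \<noteq> lam"
      by (auto simp: C_def)
    with \<mu> that show ?thesis
      by (intro eigenvectors_mult_transpose_orthogonal) (auto simp: C_def)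
  qed
  have square: "(\<Sum>j\<in>C. (column k W \<bullet> column j W) * (column j W \<bullet> column i W)) =
      lam * (column k W \<bullet> column i W)" if "i \<in> C" for i k
  proof -
    have "(\<Sum>j\<in>C. (column k W \<bullet> column j W) * (column j W \<bullet> column i W)) =
        (\<Sum>j\<in>C. (column j W \<bullet> column k W) * (column j W \<bullet> column i W))"
      by (simp add: inner_commute)
    also have "\<dots> = (\<Sum>j\<in>UNIV. (column j W \<bullet> column k W) * (column j W \<bullet> column i W))"
      by (rule sum.mono_neutral_left) (auto simp: orthogonal that)
    also have "\<dots> = column k W \<bullet> ((W ** transpose W) *v column i W)"
      by (rule inner_mult_transpose_right[symmetric])
    also have "\<dots> = lam * (column k W \<bullet> column i W)"
      using that by (simp add: C_def)
    finally show ?thesis .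
  qed
  have "gram_on W C (gram_on W C x) $ k = lam * gram_on W C x $ k" if "k \<in> C" for k
  proof -
    have "gram_on W C (gram_on W C x) $ k =
        (\<Sum>j\<in>C. (column k W \<bullet> column j W) * (\<Sum>i\<in>C. (column j W \<bullet> column i W) * x $ i))"
      using that by (simp add: gram_on_def)
    also have "\<dots> = (\<Sum>j\<in>C. \<Sum>i\<in>C. (column k W \<bullet> column j W) * (column j W \<bullet> column i W) * x $ i)"
      by (simp add: sum_distrib_left mult.assoc)
    also have "\<dots> = (\<Sum>i\<in>C. \<Sum>j\<in>C. (column k W \<bullet> column j W) * (column j W \<bullet> column i W) * x $ i)"
      by (rule sum.swap)
    also have "\<dots> = (\<Sum>i\<in>C. (\<Sum>j\<in>C. (column k W \<bullet> column j W) * (column j W \<bullet> column i W)) * x $ i)"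
      by (simp add: sum_distrib_right)
    also have "\<dots> = lam * gram_on W C x $ k"
      using that by (simp add: square gram_on_def sum_distrib_left mult.assoc)
    finally show ?thesis .
  qed
  then show ?thesis
    by (auto simp: vec_eq_iff gram_on_def)
qed

lemma gram_eigenvalue_cases:
  assumes "\<And>x. gram_on W C (gram_on W C x) = lam *\<^sub>R gram_on W C x"
    and "gram_eigenvalue W C \<mu>"
  shows "\<mu> = 0 \<or> \<mu> = lam"
proof -
  obtain x where x: "x \<noteq> 0" "gram_on W C x = \<mu> *\<^sub>R x"
    using assms(2) by (auto simp: gram_eigenvalue_def)
  then have "(\<mu> * \<mu>) *\<^sub>R x = (lam * \<mu>) *\<^sub>R x"
    using assms(1)[of x] by (simp add: linear_scale[OF linear_gram_on])
  then show ?thesis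
    using x(1) by auto
qed

lemma simplex_geometry_iff_gram_spectrum:
  assumes gram_square: "\<And>x. gram_on W C (gram_on W C x) = lam *\<^sub>R gram_on W C x"
  shows "simplex_geometry W C \<longleftrightarrow>
           ({\<mu>. gram_eigenvalue W C \<mu>} = {0, lam} \<and>
            gram_eigenspace W C 0 = gram_kernel W C \<and>
            gram_kernel W C = span {ones_on C} \<and>
            gram_eigenspace W C lam = gram_image W C \<and>
            gram_image W C = ones_perp C \<and>
            lam = real (card C) / real (dim (span ((\<lambda>i. column i W) ` C))))"
    (is "_ \<longleftrightarrow> ?spectral")
proof -
  let ?p = "real (card C)"
  have dim_eq: "real (dim (span ((\<lambda>i. column i W) ` C))) = ?p - 1"
    if "gram_kernel W C = span {ones_on C}" and "card C \<ge> 2"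
    using dim_span_columns_eq[OF that(1)] that(2) by fastforce
  show ?thesis
  proof
    assume simplex: "simplex_geometry W C"
    then have card_C: "card C \<ge> 2" and c_nonzero: "?p / (?p - 1) \<noteq> 0"
      by (auto simp: simplex_geometry_def)
    have centered: "\<And>x. x \<in> coords_on C \<Longrightarrow> gram_on W C x = (?p / (?p - 1)) *\<^sub>R center_on C x"
      using simplex simplex_geometry_iff_gram_on_center_on[OF card_C] by blast
    note spectrum = gram_kernel_eq_span_ones[OF card_C c_nonzero centered]
      gram_eigenspace_eq_ones_perp[OF card_C c_nonzero centered]
      gram_image_eq_ones_perp[OF card_C c_nonzero centered]
      gram_eigenvalues_eq[OF card_C c_nonzero centered]
    have "lam = ?p / (?p - 1)"
      using gram_eigenvalue_cases[OF gram_square, of "?p / (?p - 1)"] spectrum(4) c_nonzero by auto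
    then show ?spectral
      using spectrum dim_eq[OF spectrum(1) card_C] by (simp add: gram_eigenspace_0)
  next
    assume spectral: ?spectral
    then have "gram_eigenvalue W C lam"
      by auto
    then have card_C: "card C \<ge> 2"
      using spectral ones_perp_nontrivial_iff[of C]
      by (auto simp: gram_eigenvalue_def gram_eigenspace_def)
    have "\<forall>x\<in>coords_on C. gram_on W C x = lam *\<^sub>R center_on C x"
      using spectral gram_on_eq_center_on_if_eigenspaces[of W C lam] by auto
    moreover have "lam = ?p / (?p - 1)"
      using spectral dim_eq card_C by auto
    ultimately show "simplex_geometry W C"
      unfolding simplex_geometry_iff_gram_on_center_on[OF card_C] by simp
  qed
qed

theorem corollary5:
  fixes W :: "real^'n^'m" and lam :: real
  defines "F \<equiv> W ** transpose W"
  defines "C \<equiv> {i. F *v column i W = lam *\<^sub>R column i W}"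
  assumes eig_cols: "\<forall>i. column i W \<noteq> 0 \<and> (\<exists>\<mu>>0. F *v column i W = \<mu> *\<^sub>R column i W)"
    and lam_pos: "lam > 0"
    and lam_eig: "\<exists>v. v \<noteq> 0 \<and> F *v v = lam *\<^sub>R v"
  shows "simplex_geometry W C \<longleftrightarrow>
           ({\<mu>. gram_eigenvalue W C \<mu>} = {0, lam} \<and>
            gram_eigenspace W C 0 = gram_kernel W C \<and>
            gram_kernel W C = span {ones_on C} \<and>
            gram_eigenspace W C lam = gram_image W C \<and>
            gram_image W C = ones_perp C \<and>
            lam = real (card C) / real (dim (span ((\<lambda>i. column i W) ` C))))"
proof -
  have "gram_on W C (gram_on W C x) = lam *\<^sub>R gram_on W C x" for x
    using eig_cols by (intro gram_on_gram_on) (auto simp: F_def C_def)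
  then show ?thesis
    by (rule simplex_geometry_iff_gram_spectrum)
qed

end
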